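(* Let $m \geq 2$ be an integer, let $1 \leq p \leq q < \infty$, and let $1 \leq p_i \leq q_i < \infty$ for $i = 1, 2, \dots, m$. Define $p^*$ by $\frac{1}{p^*} = \sum_{i=1}^{m} \frac{1}{p_i}$, and assume $\frac{1}{p^*} \leq \frac{1}{p}$ and $\sum_{i=1}^{m} \frac{1}{q_i} = \frac{1}{q}$. Then for all functions $f_i \in w\mathcal{M}^{p_i}_{q_i}(\mathbb{R}^n)$, $i=1,\dots,m$, we have $$ \Bigl\| \prod_{i=1}^{m} f_i \Bigr\|_{w\mathcal{M}^{p}_{q}} \leq \prod_{i=1}^{m} \left( \frac{p_i}{p^*} \right)^{\frac{1}{p_i}} \| f_i \|_{w\mathcal{M}^{p_i}_{q_i}}. $$
   Context: For $1 \leq p \leq q < \infty$, the weak Morrey space $w\mathcal{M}^p_q(\mathbb{R}^n)$ is the set of all measurable functions $f:\mathbb{R}^n \to \mathbb{R}$ such that $$\|f\|_{w\mathcal{M}^p_q} = \sup_{B = B(a,r),\ \gamma>0} |B|^{\frac{1}{q} - \frac{1}{p}}\, \gamma\, \bigl| \{x \in B: |f(x)| > \gamma \} \bigr|^{\frac{1}{p}} < \infty,$$ where the supremum is over all open balls $B=B(a,r)\subseteq\mathbb{R}^n$ (center $a$, radius $r>0$) and all $\gamma>0$, and $|\cdot|$ denotes Lebesgue measure. Equivalently, $\|f\|_{w\mathcal{M}^p_q} = \sup_{B} |B|^{\frac1q-\frac1p}\|f\|_{L^{p,\infty}(B)}$ with $\|f\|_{L^{p,\infty}(B)} = \sup_{\gamma>0}\gamma\,|\{x\in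 B:|f(x)|>\gamma\}|^{1/p}$. The product $\prod_{i=1}^m f_i$ is the pointwise product. *)

theory Defs
  imports "HOL-Analysis.Analysis"
begin

definition wmorrey_norm :: "real \<Rightarrow> real \<Rightarrow> ('a::euclidean_space \<Rightarrow> real) \<Rightarrow> ereal" where
  "wmorrey_norm p q f =
     (SUP (a, r, \<gamma>) \<in> {(a, r, \<gamma>). (r::real) > 0 \<and> (\<gamma>::real) > 0}.
        ereal (measure lebesgue (ball (a::'a) r) powr (1/q - 1/p) * \<gamma> *
               measure lebesgue {x \<in> ball a r. \<gamma> < \<bar>f x\<bar>} powr (1/p)))"

definition wmorrey :: "real \<Rightarrow> real \<Rightarrow> ('a::euclidean_space \<Rightarrow> real) set" where
  "wmorrey p q = {f. f \<in> borel_measurable lebesgue \<and> wmorrey_norm p q f < \<infinity>}"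

end

theory Submission
  imports Defs
begin

(*
  Fix a ball B and a level gamma, and let S be the sum of the 1/p_i. For every splitting
  gamma = prod_i lambda_i into positive factors, the level set {|prod_i f_i| > gamma} in B is
  covered by the level sets {|f_i| > lambda_i}, whose measures the weak Morrey norms bound by
  (||f_i|| |B|^(1/p_i - 1/q_i) / lambda_i)^p_i. Minimising the sum of these bounds over all
  splittings (a Lagrange multiplier computation) gives, for the level set E of the product,
    gamma |E|^S <= prod_i (p_i S)^(1/p_i) ||f_i|| * |B|^(S - 1/q).
  Since |E| <= |B| and S <= 1/p, we have |E|^(1/p) <= |E|^S |B|^(1/p - S), and the powers of |B|
  then cancel exactly against the Morrey weight |B|^(1/q - 1/p).
*)

lemma product_splitting_bound_pos:
  fixes I :: "'i set" and a p :: "'i \<Rightarrow> real" and e \<gamma> S :: real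
  assumes "finite I" and pos: "\<And>i. i \<in> I \<Longrightarrow> 0 < a i \<and> 0 < p i"
    and "0 < \<gamma>" "0 \<le> e" and S: "S = (\<Sum>i\<in>I. 1 / p i)" and "0 < S"
    and bound: "\<And>l. (\<And>i. i \<in> I \<Longrightarrow> 0 < l i) \<Longrightarrow> (\<Prod>i\<in>I. l i) = \<gamma>
        \<Longrightarrow> e \<le> (\<Sum>i\<in>I. (a i / l i) powr p i)"
  shows "\<gamma> * e powr S \<le> (\<Prod>i\<in>I. a i * (p i * S) powr (1 / p i))"
proof -
  define K where "K = (\<Prod>i\<in>I. a i * p i powr (1 / p i))"
  have "0 < K"
    unfolding K_def using pos by (intro prod_pos) force
  \<comment> \<open>The optimal splitting: \<mu> makes the product of the l i equal to \<gamma>,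
    and every summand (a i / l i) powr p i then equals \<mu> / p i.\<close>
  define \<mu> where "\<mu> = (K / \<gamma>) powr (1 / S)"
  define l where "l i = a i * (p i / \<mu>) powr (1 / p i)" for i
  have "0 < \<mu>" unfolding \<mu>_def using \<open>0 < K\<close> \<open>0 < \<gamma>\<close> by simp
  have l_pos: "0 < l i" if "i \<in> I" for i
    using pos[OF that] \<open>0 < \<mu>\<close> unfolding l_def by simp
  have "(\<Prod>i\<in>I. l i) = K * (\<Prod>i\<in>I. \<mu> powr (- (1 / p i)))"
    unfolding l_def K_def prod.distrib[symmetric]
    using pos \<open>0 < \<mu>\<close> by (intro prod.cong) (simp_all add: powr_divide powr_minus_divide)
  also have "(\<Prod>i\<in>I. \<mu> powr (- (1 / p i))) = \<mu> powr (- S)"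
    using \<open>0 < \<mu>\<close> by (simp add: S powr_sum[symmetric] sum_negf)
  also have "\<mu> powr (- S) = \<gamma> / K"
    unfolding \<mu>_def using \<open>0 < K\<close> \<open>0 < \<gamma>\<close> \<open>0 < S\<close>
    by (simp add: powr_powr powr_minus divide_inverse)
  finally have "(\<Prod>i\<in>I. l i) = \<gamma>" using \<open>0 < K\<close> by simp
  then have "e \<le> (\<Sum>i\<in>I. (a i / l i) powr p i)" by (intro bound l_pos)
  also have "\<dots> = (\<Sum>i\<in>I. \<mu> * (1 / p i))"
  proof (rule sum.cong[OF refl])
    fix i assume "i \<in> I"
    then have "a i / l i = (\<mu> / p i) powr (1 / p i)"
      using pos[OF \<open>i \<in> I\<close>] \<open>0 < \<mu>\<close> unfolding l_def by (simp add: powr_divide)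
    then show "(a i / l i) powr p i = \<mu> * (1 / p i)"
      using pos[OF \<open>i \<in> I\<close>] \<open>0 < \<mu>\<close> by (simp add: powr_powr)
  qed
  also have "\<dots> = \<mu> * S" by (simp add: S sum_distrib_left)
  finally have "e powr S \<le> (\<mu> * S) powr S"
    using \<open>0 \<le> e\<close> \<open>0 < S\<close> by (intro powr_mono2) auto
  also have "\<dots> = K / \<gamma> * S powr S"
    using \<open>0 < \<mu>\<close> \<open>0 < S\<close> \<open>0 < K\<close> \<open>0 < \<gamma>\<close> unfolding \<mu>_def
    by (simp add: powr_mult powr_powr)
  finally have "\<gamma> * e powr S \<le> K * S powr S"
    using \<open>0 < \<gamma>\<close> by (simp add: field_simps)
  also have "S powr S = (\<Prod>i\<in>I. S powr (1 / p i))"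
    using \<open>0 < S\<close> by (subst (2) S) (simp add: powr_sum)
  also have "K * \<dots> = (\<Prod>i\<in>I. a i * (p i * S) powr (1 / p i))"
    unfolding K_def prod.distrib[symmetric]
    using pos \<open>0 < S\<close> by (intro prod.cong) (simp_all add: powr_mult)
  finally show ?thesis .
qed

lemma product_splitting_bound:
  fixes I :: "'i set" and a p :: "'i \<Rightarrow> real" and e \<gamma> S :: real
  assumes "finite I" and nonneg: "\<And>i. i \<in> I \<Longrightarrow> 0 \<le> a i \<and> 0 < p i"
    and "0 < \<gamma>" "0 \<le> e" and "S = (\<Sum>i\<in>I. 1 / p i)" and "0 < S"
    and bound: "\<And>l. (\<And>i. i \<in> I \<Longrightarrow> 0 < l i) \<Longrightarrow> (\<Prod>i\<in>I. l i) = \<gamma>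
        \<Longrightarrow> e \<le> (\<Sum>i\<in>I. (a i / l i) powr p i)"
  shows "\<gamma> * e powr S \<le> (\<Prod>i\<in>I. a i * (p i * S) powr (1 / p i))"
proof -
  define G where "G \<epsilon> = (\<Prod>i\<in>I. (a i + \<epsilon>) * (p i * S) powr (1 / p i))" for \<epsilon> :: real
  have "\<gamma> * e powr S \<le> G \<epsilon>" if "0 < \<epsilon>" for \<epsilon>
    unfolding G_def
  proof (rule product_splitting_bound_pos[OF \<open>finite I\<close> _ assms(3-6)])
    show "0 < a i + \<epsilon> \<and> 0 < p i" if "i \<in> I" for i
      using nonneg[OF that] \<open>0 < \<epsilon>\<close> by auto
  next
    fix l :: "'i \<Rightarrow> real"
    assume l: "\<And>i. i \<in> I \<Longrightarrow> 0 < l i" "(\<Prod>i\<in>I. l i) = \<gamma>"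
    have "e \<le> (\<Sum>i\<in>I. (a i / l i) powr p i)" by (rule bound[OF l])
    also have "\<dots> \<le> (\<Sum>i\<in>I. ((a i + \<epsilon>) / l i) powr p i)"
      using nonneg l(1) \<open>0 < \<epsilon>\<close>
      by (intro sum_mono powr_mono2 divide_right_mono) (force intro: less_imp_le)+
    finally show "e \<le> (\<Sum>i\<in>I. ((a i + \<epsilon>) / l i) powr p i)" .
  qed
  then have "\<forall>\<^sub>F \<epsilon> in at_right 0. \<gamma> * e powr S \<le> G \<epsilon>"
    by (auto simp: eventually_at_filter)
  moreover have "(G \<longlongrightarrow> G 0) (at_right 0)"
    unfolding G_def by (intro tendsto_intros)
  ultimately have "\<gamma> * e powr S \<le> G 0"
    by (intro tendsto_lowerbound) auto
  then show ?thesis unfolding G_def by simp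
qed

lemma powr_le_powr_mult_powr_diff:
  fixes e b s t :: real
  assumes "0 \<le> e" "e \<le> b" "0 < s" "s \<le> t"
  shows "e powr t \<le> e powr s * b powr (t - s)"
proof (cases "e = 0")
  case False
  then have "e powr t = e powr s * e powr (t - s)"
    by (simp add: powr_add[symmetric])
  also have "\<dots> \<le> e powr s * b powr (t - s)"
    using assms False by (intro mult_left_mono powr_mono2) auto
  finally show ?thesis .
qed (use assms in simp)

lemma wmorrey_norm_upper:
  fixes f :: "'a::euclidean_space \<Rightarrow> real"
  assumes "0 < r" "0 < \<gamma>"
  shows "ereal (measure lebesgue (ball a r) powr (1/q - 1/p) * \<gamma> *
           measure lebesgue {x \<in> ball a r. \<gamma> < \<bar>f x\<bar>} powr (1/p)) \<le> wmorrey_norm p q f"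
  unfolding wmorrey_norm_def
  by (rule SUP_upper2[where i="(a, r, \<gamma>)"]) (use assms in auto)

lemma wmorrey_norm_leI:
  fixes f :: "'a::euclidean_space \<Rightarrow> real"
  assumes "\<And>a r \<gamma>. 0 < r \<Longrightarrow> 0 < \<gamma> \<Longrightarrow>
      ereal (measure lebesgue (ball a r) powr (1/q - 1/p) * \<gamma> *
        measure lebesgue {x \<in> ball a r. \<gamma> < \<bar>f x\<bar>} powr (1/p)) \<le> C"
  shows "wmorrey_norm p q f \<le> C"
  unfolding wmorrey_norm_def using assms by (auto intro!: SUP_least)

lemma wmorrey_norm_nonneg: "0 \<le> wmorrey_norm p q (f :: 'a::euclidean_space \<Rightarrow> real)"
  using wmorrey_norm_upper[where r=1 and \<gamma>=1 and a=0 and p=p and q=q and f=f]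
  by (rule order_trans[rotated]) auto

lemma wmorrey_norm_eq_ereal:
  assumes "f \<in> wmorrey p q"
  shows "wmorrey_norm p q f = ereal (real_of_ereal (wmorrey_norm p q f))"
  using assms wmorrey_norm_nonneg[of p q f] unfolding wmorrey_def by (auto simp: ereal_real)

lemma level_set_in_ball_lmeasurable:
  fixes g :: "'a::euclidean_space \<Rightarrow> real"
  assumes "g \<in> borel_measurable lebesgue"
  shows "{x \<in> ball a r. c < \<bar>g x\<bar>} \<in> lmeasurable"
proof (rule fmeasurableI2[OF lmeasurable_ball])
  show "{x \<in> ball a r. c < \<bar>g x\<bar>} \<in> sets lebesgue"
    using assms fmeasurableD[OF lmeasurable_ball] by measurable
qed auto

lemma measure_level_set_le:
  fixes f :: "'a::euclidean_space \<Rightarrow> real"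
  assumes norm: "wmorrey_norm p q f = ereal N" and "0 < r" "0 < \<gamma>" "0 < p"
  shows "measure lebesgue {x \<in> ball a r. \<gamma> < \<bar>f x\<bar>}
           \<le> (N * measure lebesgue (ball a r) powr (1/p - 1/q) / \<gamma>) powr p"
proof -
  define B where "B = measure lebesgue (ball a r)"
  define E where "E = measure lebesgue {x \<in> ball a r. \<gamma> < \<bar>f x\<bar>}"
  have "0 < B" unfolding B_def using content_ball_pos[OF \<open>0 < r\<close>] by simp
  have "B powr (1/q - 1/p) * \<gamma> * E powr (1/p) \<le> N"
    using wmorrey_norm_upper[OF \<open>0 < r\<close> \<open>0 < \<gamma>\<close>, where p=p and q=q and f=f and a=a]
    unfolding norm B_def E_def by simp
  then have "B powr (1/q - 1/p) * \<gamma> * E powr (1/p) * B powr (1/p - 1/q)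
      \<le> N * B powr (1/p - 1/q)"
    by (simp add: mult_right_mono)
  then have "E powr (1/p) \<le> N * B powr (1/p - 1/q) / \<gamma>"
    using \<open>0 < B\<close> \<open>0 < \<gamma>\<close> by (simp add: field_simps powr_add[symmetric])
  then have "(E powr (1/p)) powr p \<le> (N * B powr (1/p - 1/q) / \<gamma>) powr p"
    using \<open>0 < p\<close> by (intro powr_mono2) auto
  then show ?thesis
    using \<open>0 < p\<close> unfolding B_def E_def by (simp add: powr_powr)
qed

lemma level_set_prod_subset:
  fixes f :: "'i \<Rightarrow> 'a \<Rightarrow> real"
  assumes "(\<Prod>i\<in>I. l i) = \<gamma>"
  shows "{x \<in> B. \<gamma> < \<bar>\<Prod>i\<in>I. f i x\<bar>} \<subseteq> (\<Union>i\<in>I. {x \<in> B. l i < \<bar>f i x\<bar>})"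
proof
  fix x assume x: "x \<in> {x \<in> B. \<gamma> < \<bar>\<Prod>i\<in>I. f i x\<bar>}"
  show "x \<in> (\<Union>i\<in>I. {x \<in> B. l i < \<bar>f i x\<bar>})"
  proof (rule ccontr)
    assume "x \<notin> (\<Union>i\<in>I. {x \<in> B. l i < \<bar>f i x\<bar>})"
    then have "\<bar>\<Prod>i\<in>I. f i x\<bar> \<le> (\<Prod>i\<in>I. l i)"
      using x by (simp add: abs_prod not_less prod_mono)
    with assms x show False by simp
  qed
qed

lemma measure_level_set_prod_le:
  fixes f :: "'i \<Rightarrow> 'a::euclidean_space \<Rightarrow> real"
  assumes "finite I" "\<And>i. i \<in> I \<Longrightarrow> f i \<in> borel_measurable lebesgue"
    and "(\<Prod>i\<in>I. l i) = \<gamma>"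
  shows "measure lebesgue {x \<in> ball a r. \<gamma> < \<bar>\<Prod>i\<in>I. f i x\<bar>}
           \<le> (\<Sum>i\<in>I. measure lebesgue {x \<in> ball a r. l i < \<bar>f i x\<bar>})"
proof -
  have level_sets: "{x \<in> ball a r. c < \<bar>f i x\<bar>} \<in> lmeasurable" if "i \<in> I" for c i
    using assms(2)[OF that] by (rule level_set_in_ball_lmeasurable)
  have "measure lebesgue {x \<in> ball a r. \<gamma> < \<bar>\<Prod>i\<in>I. f i x\<bar>}
          \<le> measure lebesgue (\<Union>i\<in>I. {x \<in> ball a r. l i < \<bar>f i x\<bar>})"
    using assms level_sets
    by (intro measure_mono_fmeasurable level_set_prod_subset fmeasurable.finite_UN
        fmeasurableD level_set_in_ball_lmeasurable borel_measurable_prod) auto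
  also have "\<dots> \<le> (\<Sum>i\<in>I. measure lebesgue {x \<in> ball a r. l i < \<bar>f i x\<bar>})"
    using assms level_sets by (intro measure_UNION_le) auto
  finally show ?thesis .
qed

lemma measure_level_set_prod_powr_le:
  fixes I :: "'i set" and f :: "'i \<Rightarrow> 'a::euclidean_space \<Rightarrow> real" and ps qs N :: "'i \<Rightarrow> real"
  defines "S \<equiv> \<Sum>i\<in>I. 1 / ps i"
  assumes "finite I" "I \<noteq> {}" and ps: "\<And>i. i \<in> I \<Longrightarrow> 0 < ps i"
    and qs: "(\<Sum>i\<in>I. 1 / qs i) = 1 / q"
    and meas: "\<And>i. i \<in> I \<Longrightarrow> f i \<in> borel_measurable lebesgue"
    and norm: "\<And>i. i \<in> I \<Longrightarrow> wmorrey_norm (ps i) (qs i) (f i) = ereal (N i)"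
    and "0 < r" "0 < \<gamma>"
  shows "\<gamma> * measure lebesgue {x \<in> ball a r. \<gamma> < \<bar>\<Prod>i\<in>I. f i x\<bar>} powr S
         \<le> (\<Prod>i\<in>I. (ps i * S) powr (1 / ps i) * N i) * measure lebesgue (ball a r) powr (S - 1/q)"
proof -
  define B where "B = measure lebesgue (ball a r)"
  define A where "A i = N i * B powr (1 / ps i - 1 / qs i)" for i
  have "0 < S" unfolding S_def using \<open>finite I\<close> \<open>I \<noteq> {}\<close> ps by (intro sum_pos) auto
  have "0 < B" unfolding B_def using content_ball_pos[OF \<open>0 < r\<close>] by simp
  have N_nonneg: "0 \<le> N i" if "i \<in> I" for i
    using wmorrey_norm_nonneg[of "ps i" "qs i" "f i"] norm[OF that] by simp
  have "\<gamma> * measure lebesgue {x \<in> ball a r. \<gamma> < \<bar>\<Prod>i\<in>I. f i x\<bar>} powr S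
      \<le> (\<Prod>i\<in>I. A i * (ps i * S) powr (1 / ps i))"
  proof (rule product_splitting_bound[OF \<open>finite I\<close> _ \<open>0 < \<gamma>\<close> _
        meta_eq_to_obj_eq[OF S_def] \<open>0 < S\<close>])
    fix l :: "'i \<Rightarrow> real"
    assume l: "\<And>i. i \<in> I \<Longrightarrow> 0 < l i" "(\<Prod>i\<in>I. l i) = \<gamma>"
    have "measure lebesgue {x \<in> ball a r. \<gamma> < \<bar>\<Prod>i\<in>I. f i x\<bar>}
        \<le> (\<Sum>i\<in>I. measure lebesgue {x \<in> ball a r. l i < \<bar>f i x\<bar>})"
      using \<open>finite I\<close> meas l(2) by (rule measure_level_set_prod_le)
    also have "\<dots> \<le> (\<Sum>i\<in>I. (A i / l i) powr ps i)"
      unfolding A_def B_def using norm ps l(1) \<open>0 < r\<close>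
      by (intro sum_mono measure_level_set_le) auto
    finally show "measure lebesgue {x \<in> ball a r. \<gamma> < \<bar>\<Prod>i\<in>I. f i x\<bar>}
        \<le> (\<Sum>i\<in>I. (A i / l i) powr ps i)" .
  qed (use N_nonneg ps in \<open>auto simp: A_def\<close>)
  also have "(\<Prod>i\<in>I. A i * (ps i * S) powr (1 / ps i))
      = (\<Prod>i\<in>I. (ps i * S) powr (1 / ps i) * N i) * B powr (\<Sum>i\<in>I. 1 / ps i - 1 / qs i)"
    unfolding A_def using \<open>0 < B\<close> by (simp add: powr_sum prod.distrib mult_ac)
  also have "(\<Sum>i\<in>I. 1 / ps i - 1 / qs i) = S - 1/q"
    unfolding S_def qs[symmetric] by (simp add: sum_subtractf)
  finally show ?thesis unfolding B_def .
qed

lemma wmorrey_prod_ball_bound: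
  fixes I :: "'i set" and f :: "'i \<Rightarrow> 'a::euclidean_space \<Rightarrow> real" and ps qs N :: "'i \<Rightarrow> real"
  defines "S \<equiv> \<Sum>i\<in>I. 1 / ps i"
  assumes "finite I" "I \<noteq> {}" and ps: "\<And>i. i \<in> I \<Longrightarrow> 0 < ps i"
    and "S \<le> 1 / p" "(\<Sum>i\<in>I. 1 / qs i) = 1 / q"
    and meas: "\<And>i. i \<in> I \<Longrightarrow> f i \<in> borel_measurable lebesgue"
    and "\<And>i. i \<in> I \<Longrightarrow> wmorrey_norm (ps i) (qs i) (f i) = ereal (N i)"
    and "0 < r" "0 < \<gamma>"
  shows "measure lebesgue (ball a r) powr (1/q - 1/p) * \<gamma> *
           measure lebesgue {x \<in> ball a r. \<gamma> < \<bar>\<Prod>i\<in>I. f i x\<bar>} powr (1/p)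
         \<le> (\<Prod>i\<in>I. (ps i * S) powr (1 / ps i) * N i)"
proof -
  define B where "B = measure lebesgue (ball a r)"
  define E where "E = measure lebesgue {x \<in> ball a r. \<gamma> < \<bar>\<Prod>i\<in>I. f i x\<bar>}"
  define P where "P = (\<Prod>i\<in>I. (ps i * S) powr (1 / ps i) * N i)"
  have "0 < S" unfolding S_def using \<open>finite I\<close> \<open>I \<noteq> {}\<close> ps by (intro sum_pos) auto
  have "0 < B" unfolding B_def using content_ball_pos[OF \<open>0 < r\<close>] by simp
  have "E \<le> B" unfolding E_def B_def using meas
    by (intro measure_mono_fmeasurable level_set_in_ball_lmeasurable fmeasurableD
        lmeasurable_ball borel_measurable_prod) auto
  then have "E powr (1/p) \<le> E powr S * B powr (1/p - S)"
    using \<open>0 < S\<close> \<open>S \<le> 1/p\<close> unfolding E_def by (intro powr_le_powr_mult_powr_diff) auto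
  then have "B powr (1/q - 1/p) * \<gamma> * E powr (1/p)
      \<le> B powr (1/q - 1/p) * \<gamma> * (E powr S * B powr (1/p - S))"
    using \<open>0 < \<gamma>\<close> by (simp add: mult_left_mono)
  also have "\<dots> = B powr (1/q - S) * (\<gamma> * E powr S)"
    using \<open>0 < B\<close> by (simp add: mult_ac powr_add[symmetric])
  also have "\<dots> \<le> B powr (1/q - S) * (P * B powr (S - 1/q))"
    using measure_level_set_prod_powr_le[OF assms(2-4,6-10)]
    unfolding S_def[symmetric] P_def E_def B_def by (simp add: mult_left_mono)
  also have "\<dots> = P"
    using \<open>0 < B\<close> by (simp add: mult.left_commute powr_add[symmetric])
  finally show ?thesis unfolding B_def E_def P_def .
qed

lemma wmorrey_norm_prod_le:
  fixes f :: "'i \<Rightarrow> 'a::euclidean_space \<Rightarrow> real" and ps qs :: "'i \<Rightarrow> real"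
  assumes "finite I" "I \<noteq> {}" "\<And>i. i \<in> I \<Longrightarrow> 0 < ps i"
    and "(\<Sum>i\<in>I. 1 / ps i) \<le> 1 / p" "(\<Sum>i\<in>I. 1 / qs i) = 1 / q"
    and f: "\<And>i. i \<in> I \<Longrightarrow> f i \<in> wmorrey (ps i) (qs i)"
  shows "wmorrey_norm p q (\<lambda>x. \<Prod>i\<in>I. f i x)
           \<le> ereal (\<Prod>i\<in>I. (ps i * (\<Sum>j\<in>I. 1 / ps j)) powr (1 / ps i)
                 * real_of_ereal (wmorrey_norm (ps i) (qs i) (f i)))"
proof (rule wmorrey_norm_leI)
  fix a :: 'a and r \<gamma> :: real
  assume "0 < r" "0 < \<gamma>"
  have "f i \<in> borel_measurable lebesgue" if "i \<in> I" for i
    using f[OF that] unfolding wmorrey_def by blast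
  with wmorrey_prod_ball_bound[OF assms(1-5) _ wmorrey_norm_eq_ereal[OF f] \<open>0 < r\<close> \<open>0 < \<gamma>\<close>]
  show "ereal (measure lebesgue (ball a r) powr (1/q - 1/p) * \<gamma> *
          measure lebesgue {x \<in> ball a r. \<gamma> < \<bar>\<Prod>i\<in>I. f i x\<bar>} powr (1/p))
        \<le> ereal (\<Prod>i\<in>I. (ps i * (\<Sum>j\<in>I. 1 / ps j)) powr (1 / ps i)
                 * real_of_ereal (wmorrey_norm (ps i) (qs i) (f i)))"
    by simp
qed

theorem theorem2p2:
  fixes m :: nat and p q :: real and ps qs :: "nat \<Rightarrow> real"
    and f :: "nat \<Rightarrow> 'a::euclidean_space \<Rightarrow> real"
  assumes "m \<ge> 2"
    and "1 \<le> p" "p \<le> q"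
    and "\<And>i. i \<in> {1..m} \<Longrightarrow> 1 \<le> ps i \<and> ps i \<le> qs i"
    and "(\<Sum>i\<in>{1..m}. 1 / ps i) \<le> 1 / p"
    and "(\<Sum>i\<in>{1..m}. 1 / qs i) = 1 / q"
    and "\<And>i. i \<in> {1..m} \<Longrightarrow> f i \<in> wmorrey (ps i) (qs i)"
  shows "wmorrey_norm p q (\<lambda>x. \<Prod>i\<in>{1..m}. f i x)
           \<le> ereal (\<Prod>i\<in>{1..m}.
                 (ps i / (1 / (\<Sum>j\<in>{1..m}. 1 / ps j))) powr (1 / ps i)
                 * real_of_ereal (wmorrey_norm (ps i) (qs i) (f i)))"
proof -
  have "{1..m} \<noteq> {}" using \<open>m \<ge> 2\<close> by simp
  moreover have "0 < ps i" if "i \<in> {1..m}" for i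
    using assms(4)[OF that] by linarith
  ultimately show ?thesis
    using wmorrey_norm_prod_le[of "{1..m}" ps p qs q f] assms(5-7) by simp
qed

end
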